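(* Let $M$ be $\mathbb R^n$ or a compact rank-one symmetric space, and for $r>0$ let $h_r$ be the solution of $h_r''(h_r')^{n-1}=e^{h_r}\mathcal D_M(u)$ on $[0,r)$ with $\lim_{u\to r}h_r(u)=\infty$. Put $a_r=h_r(0)=\inf_{[0,r)}h_r$. Then $r\mapsto a_r$ is decreasing and $\lim_{r\to\infty}a_r=-\infty$.
   Context: $n\ge2$ is the real dimension of $M$; $u=\sqrt\rho$, $\rho(x,v)=4|v|^2$ on $TM$ with the adapted complex structure (defined on all of $TM$ in these cases). $\mathcal D_M(u)=u^{n-1}$ for $\mathbb R^n$; $(\sinh u)^{n-1}$ for the round sphere and real projective space; $2^{n-1}(\cosh\frac u2)^k(\sinh\frac u2)^{n-1}$, $k=1,3,7$, for complex projective space, quaternionic projective space, Cayley plane. Solutions are real-analytic in $u^2$ (so $h_r'(0)=0$). *)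

theory Defs
  imports "HOL-Analysis.Analysis"
begin

datatype model_space = Euclidean | RoundSphere | RealProj | ComplexProj | QuatProj | CayleyPlane

text \<open>Admissible real dimensions n of M.\<close>
definition valid_dim :: "model_space \<Rightarrow> nat \<Rightarrow> bool" where
  "valid_dim M n \<longleftrightarrow> 2 \<le> n \<and>
     (case M of
        ComplexProj \<Rightarrow> even n
      | QuatProj \<Rightarrow> 4 dvd n
      | CayleyPlane \<Rightarrow> n = 16
      | _ \<Rightarrow> True)"

definition DM :: "model_space \<Rightarrow> nat \<Rightarrow> real \<Rightarrow> real" where
  "DM M n u = (case M of
      Euclidean \<Rightarrow> u ^ (n - 1)
    | RoundSphere \<Rightarrow> sinh u ^ (n - 1)
    | RealProj \<Rightarrow> sinh u ^ (n - 1)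
    | ComplexProj \<Rightarrow> 2 ^ (n - 1) * cosh (u / 2) ^ 1 * sinh (u / 2) ^ (n - 1)
    | QuatProj \<Rightarrow> 2 ^ (n - 1) * cosh (u / 2) ^ 3 * sinh (u / 2) ^ (n - 1)
    | CayleyPlane \<Rightarrow> 2 ^ (n - 1) * cosh (u / 2) ^ 7 * sinh (u / 2) ^ (n - 1))"

text \<open>f is a (C^2) solution on [0,r) of f'' (f')^(n-1) = e^f D_M(u), with f'(0) = 0
  (real-analyticity in u^2) and f(u) \<rightarrow> +\<infinity> as u \<rightarrow> r.\<close>
definition is_blowup_solution :: "model_space \<Rightarrow> nat \<Rightarrow> real \<Rightarrow> (real \<Rightarrow> real) \<Rightarrow> bool" where
  "is_blowup_solution M n r f \<longleftrightarrow>
     (\<exists>f' f''.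
        (\<forall>u\<in>{0..<r}. (f has_real_derivative f' u) (at u within {0..<r})
                     \<and> (f' has_real_derivative f'' u) (at u within {0..<r})
                     \<and> f'' u * (f' u) ^ (n - 1) = exp (f u) * DM M n u)
        \<and> continuous_on {0..<r} f''
        \<and> f' 0 = 0)
     \<and> filterlim f at_top (at_left r)"

end

theory Submission
  imports Defs
begin

text \<open>
  Let \<open>h_r\<close> solve \<open>h'' (h')^{n-1} = e^h D_M(u)\<close> on \<open>[0,r)\<close> with \<open>h'(0) = 0\<close> and \<open>h \<rightarrow> \<infinity>\<close> at \<open>r\<close>.
  Written as \<open>((h')^n)' = n e^h D_M\<close>, the equation admits a comparison principle: a subsolution
  starting strictly below a non-decreasing supersolution stays below it.  The whole proof rests on it.

  The three claims of the theorem then follow: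
  \<^item> \<open>h_r(0)\<close> is the infimum, since \<open>h_r\<close> is non-decreasing;
  \<^item> \<open>r \<mapsto> h_r(0)\<close> is strictly decreasing: a rescaled and shifted copy of \<open>h_{r_2}\<close> is a
    supersolution on \<open>[0,r_1)\<close> that is bounded there, so it cannot stay above \<open>h_{r_1}\<close>;
  \<^item> \<open>h_r(0) \<rightarrow> -\<infinity>\<close>: the explicit subsolution \<open>\<psi>_L(x) = C_n + L - (n+1) log(e^L - x^2)\<close>
    blows up at \<open>e^{L/2}\<close>, so \<open>h_r(0) \<le> \<psi>_L(0) = C_n - n L\<close> whenever \<open>r > e^{L/2}\<close>.
\<close>

lemma nonneg_deriv_imp_le:
  fixes g g' :: "real \<Rightarrow> real"
  assumes ab: "a \<le> b"
    and deriv: "\<And>x. x \<in> {a..b} \<Longrightarrow> (g has_real_derivative g' x) (at x within {a..b})"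
    and nonneg: "\<And>x. x \<in> {a<..<b} \<Longrightarrow> 0 \<le> g' x"
  shows "g a \<le> g b"
proof (cases "a = b")
  case False
  then have "a < b" using ab by simp
  then obtain x where x: "x \<in> {a<..<b}" "g b - g a = g' x * (b - a)"
    using mvt_simple[of a b g "\<lambda>x h. g' x * h"] deriv
    by (auto simp: has_field_derivative_def mult_commute_abs)
  moreover have "0 \<le> g' x * (b - a)" using nonneg[OF x(1)] ab by simp
  ultimately show ?thesis by simp
qed simp

lemma sinh_ge_self:
  fixes u :: real
  assumes "0 \<le> u"
  shows "u \<le> sinh u"
proof -
  have "(\<lambda>x. sinh x - x) 0 \<le> (\<lambda>x. sinh x - x) u"
    by (rule nonneg_deriv_imp_le[OF assms, where g' = "\<lambda>x. cosh x - 1"])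
       (auto intro!: derivative_eq_intros simp: cosh_real_ge_1)
  then show ?thesis by simp
qed

text \<open>Every density dominates the Euclidean one: \<open>u^{n-1} \<le> D_M(u)\<close> for \<open>u \<ge> 0\<close>.  This is what
  makes the Euclidean barrier below work for all model spaces at once.\<close>
lemma DM_ge_Euclidean:
  fixes u :: real
  assumes u: "0 \<le> u"
  shows "u ^ (n - 1) \<le> DM M n u"
proof -
  have sphere: "u ^ (n - 1) \<le> sinh u ^ (n - 1)"
    using sinh_ge_self[OF u] u by (simp add: power_mono)
  have "u \<le> 2 * sinh (u / 2)" using sinh_ge_self[of "u / 2"] u by simp
  then have half: "u ^ (n - 1) \<le> 2 ^ (n - 1) * sinh (u / 2) ^ (n - 1)"
    using u by (metis power_mono power_mult_distrib)
  have proj: "u ^ (n - 1) \<le> 2 ^ (n - 1) * cosh (u / 2) ^ k * sinh (u / 2) ^ (n - 1)" for k :: nat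
  proof -
    have "1 \<le> cosh (u / 2) ^ k" by (simp add: cosh_real_ge_1 one_le_power)
    moreover have "0 \<le> 2 ^ (n - 1) * sinh (u / 2) ^ (n - 1)" using u by simp
    ultimately have "2 ^ (n - 1) * sinh (u / 2) ^ (n - 1)
        \<le> cosh (u / 2) ^ k * (2 ^ (n - 1) * sinh (u / 2) ^ (n - 1))"
      by (metis mult_1 mult_right_mono)
    also have "\<dots> = 2 ^ (n - 1) * cosh (u / 2) ^ k * sinh (u / 2) ^ (n - 1)"
      by (simp only: mult_ac)
    finally show ?thesis using half by linarith
  qed
  show ?thesis using sphere proj[of 1] proj[of 3] proj[of 7] by (cases M) (auto simp: DM_def)
qed

lemma DM_nonneg:
  fixes u :: real
  assumes "0 \<le> u"
  shows "0 \<le> DM M n u"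
  using DM_ge_Euclidean[OF assms, of n M] zero_le_power[OF assms, of "n - 1"] by linarith

lemma DM_pos:
  fixes u :: real
  assumes "0 < u"
  shows "0 < DM M n u"
  using DM_ge_Euclidean[of u n M] zero_less_power[OF assms, of "n - 1"] assms by linarith

text \<open>\<open>D_M\<close> is increasing on \<open>[0,\<infinity>)\<close>; this is what makes rescaled solutions supersolutions.\<close>
lemma DM_mono:
  fixes u v :: real
  assumes u: "0 \<le> u" and uv: "u \<le> v"
  shows "DM M n u \<le> DM M n v"
proof -
  have sinh: "sinh (s * u) ^ m \<le> sinh (s * v) ^ m" if "0 < s" for s :: real and m :: nat
    using that u uv by (intro power_mono) (auto simp: mult_left_mono)
  have cosh: "cosh (u / 2) ^ k \<le> cosh (v / 2) ^ k" for k :: nat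
    using u uv by (intro power_mono) (auto simp: cosh_real_nonneg_le_iff)
  have proj: "2 ^ (n - 1) * cosh (u / 2) ^ k * sinh (u / 2) ^ (n - 1)
      \<le> 2 ^ (n - 1) * cosh (v / 2) ^ k * sinh (v / 2) ^ (n - 1)" for k :: nat
    using cosh[of k] sinh[of "1/2" "n - 1"] u by (intro mult_mono) auto
  show ?thesis
    using power_mono[OF uv u, of "n - 1"] sinh[of 1 "n - 1"] proj[of 1] proj[of 3] proj[of 7]
    by (cases M) (auto simp: DM_def)
qed

text \<open>Continuous induction on \<open>[0,T)\<close>: if a continuous function is positive at every \<open>t\<close> up to
  which it has been positive (for \<open>t = 0\<close> the hypothesis is vacuous), it is positive everywhere.
  Otherwise \<open>t = inf {u. g u \<le> 0}\<close> would satisfy \<open>g t > 0\<close>, and by continuity \<open>g > 0\<close> slightly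
  beyond \<open>t\<close> as well, contradicting the choice of \<open>t\<close>.\<close>
lemma continuous_induction:
  fixes g :: "real \<Rightarrow> real"
  assumes cont: "continuous_on {0..<T} g"
    and step: "\<And>t. t \<in> {0..<T} \<Longrightarrow> \<forall>u\<in>{0..<t}. 0 < g u \<Longrightarrow> 0 < g t"
  shows "\<forall>u\<in>{0..<T}. 0 < g u"
proof (rule ccontr)
  define S where "S = {u\<in>{0..<T}. g u \<le> 0}"
  assume "\<not> ?thesis"
  then obtain u0 where "u0 \<in> {0..<T}" "g u0 \<le> 0" by (auto simp: not_less)
  then have u0: "u0 \<in> S" by (simp add: S_def)
  have bdd: "bdd_below S" by (auto simp: S_def bdd_below_def)
  define t where "t = Inf S"
  have t_le: "t \<le> s" if "s \<in> S" for s unfolding t_def using that bdd by (rule cInf_lower)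
  have "0 \<le> t" unfolding t_def by (rule cInf_greatest) (use u0 in \<open>auto simp: S_def\<close>)
  moreover have "t < T" using t_le[OF u0] u0 by (simp add: S_def)
  ultimately have t: "t \<in> {0..<T}" by simp
  have "0 < g u" if u: "u \<in> {0..<t}" for u
  proof (rule ccontr)
    assume "\<not> 0 < g u"
    then have "u \<in> S" using u t by (simp add: S_def)
    then show False using t_le u by fastforce
  qed
  with t have pos: "0 < g t" using step by blast
  have "(g \<longlongrightarrow> g t) (at t within {0..<T})"
    using cont t by (simp add: continuous_on_eq_continuous_within continuous_within)
  from order_tendstoD(1)[OF this pos] obtain d where d: "0 < d"
    "\<And>x. x \<in> {0..<T} \<Longrightarrow> x \<noteq> t \<Longrightarrow> dist x t < d \<Longrightarrow> 0 < g x"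
    by (auto simp: eventually_at)
  have "Inf S < t + d" using d(1) by (simp add: t_def)
  then obtain s where s: "s \<in> S" "s < t + d"
    using cInf_less_iff[OF _ bdd] u0 by blast
  have "0 < g s"
  proof (cases "s = t")
    case False
    moreover have "s \<in> {0..<T}" "dist s t < d"
      using s t_le[OF s(1)] by (auto simp: S_def dist_real_def)
    ultimately show ?thesis using d(2) by blast
  qed (use pos in simp)
  with s(1) show False by (simp add: S_def)
qed

text \<open>Then \<open>p < q\<close> on all of \<open>[0,T)\<close>: as long as \<open>p < q\<close>, integrating twice gives first \<open>p' \<le> q'\<close>
  and then \<open>q - p \<ge> q(0) - p(0) > 0\<close>.\<close>
lemma comparison:
  fixes p q p' q' P' Q' :: "real \<Rightarrow> real" and n :: nat
  assumes n: "0 < n"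
    and dp: "\<And>u. u \<in> {0..<T} \<Longrightarrow> (p has_real_derivative p' u) (at u within {0..<T})"
    and dq: "\<And>u. u \<in> {0..<T} \<Longrightarrow> (q has_real_derivative q' u) (at u within {0..<T})"
    and dP: "\<And>u. u \<in> {0..<T} \<Longrightarrow> ((\<lambda>x. p' x ^ n) has_real_derivative P' u) (at u within {0..<T})"
    and dQ: "\<And>u. u \<in> {0..<T} \<Longrightarrow> ((\<lambda>x. q' x ^ n) has_real_derivative Q' u) (at u within {0..<T})"
    and init: "p 0 < q 0" "p' 0 ^ n \<le> q' 0 ^ n"
    and q'_nonneg: "\<And>u. u \<in> {0..<T} \<Longrightarrow> 0 \<le> q' u"
    and super: "\<And>u. u \<in> {0..<T} \<Longrightarrow> p u \<le> q u \<Longrightarrow> P' u \<le> Q' u"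
  shows "\<forall>u\<in>{0..<T}. p u < q u"
proof -
  have "continuous_on {0..<T} (\<lambda>x. q x - p x)"
    using DERIV_continuous_on[OF dq] DERIV_continuous_on[OF dp] by (rule continuous_on_diff)
  then have "\<forall>u\<in>{0..<T}. 0 < q u - p u"
  proof (rule continuous_induction)
    fix t assume t: "t \<in> {0..<T}" and below: "\<forall>u\<in>{0..<t}. 0 < q u - p u"
    have sub: "{0..x} \<subseteq> {0..<T}" if "x \<in> {0..t}" for x using that t by auto
    have slope: "p' x \<le> q' x" if x: "x \<in> {0..t}" for x
    proof -
      have "(\<lambda>y. q' y ^ n - p' y ^ n) 0 \<le> (\<lambda>y. q' y ^ n - p' y ^ n) x"
      proof (rule nonneg_deriv_imp_le[where g = "\<lambda>y. q' y ^ n - p' y ^ n"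
            and g' = "\<lambda>y. Q' y - P' y"])
        fix y assume "y \<in> {0..x}"
        then have y: "y \<in> {0..<T}" using sub[OF x] by blast
        show "((\<lambda>y. q' y ^ n - p' y ^ n) has_real_derivative Q' y - P' y) (at y within {0..x})"
          by (intro DERIV_diff has_field_derivative_subset[OF dQ[OF y] sub[OF x]]
              has_field_derivative_subset[OF dP[OF y] sub[OF x]])
      next
        fix y assume "y \<in> {0<..<x}"
        then have "y \<in> {0..<t}" using x by auto
        then have "y \<in> {0..<T}" "p y < q y" using below t by auto
        then show "0 \<le> Q' y - P' y" using super[of y] by simp
      qed (use x in auto)
      then have "p' x ^ Suc (n - 1) \<le> q' x ^ Suc (n - 1)" using init n by simp
      moreover have "0 \<le> q' x" using q'_nonneg x t by simp
      ultimately show ?thesis by (rule power_le_imp_le_base)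
    qed
    have "q 0 - p 0 \<le> q t - p t"
    proof (rule nonneg_deriv_imp_le[where g = "\<lambda>y. q y - p y" and g' = "\<lambda>y. q' y - p' y"])
      fix y assume "y \<in> {0..t}"
      then have y: "y \<in> {0..<T}" using t by auto
      have "{0..t} \<subseteq> {0..<T}" using t by auto
      then show "((\<lambda>y. q y - p y) has_real_derivative q' y - p' y) (at y within {0..t})"
        by (intro DERIV_diff has_field_derivative_subset[OF dq[OF y]]
            has_field_derivative_subset[OF dp[OF y]])
    qed (use slope t in auto)
    then show "0 < q t - p t" using init by simp
  qed
  then show ?thesis by simp
qed

lemma blowup_unbounded:
  fixes f :: "real \<Rightarrow> real"
  assumes lim: "filterlim f at_top (at_left r)" and r: "0 < r"
  shows "\<exists>u\<in>{0..<r}. B < f u"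
proof -
  have "eventually (\<lambda>x. B < f x) (at_left r)" using lim by (simp add: filterlim_at_top_dense)
  moreover have "eventually (\<lambda>x. x \<in> {0<..<r}) (at_left r)" using r by (rule eventually_at_left_real)
  ultimately have "eventually (\<lambda>x. B < f x \<and> x \<in> {0<..<r}) (at_left r)" by (rule eventually_conj)
  then obtain u where "B < f u" "u \<in> {0<..<r}"
    using eventually_happens'[OF trivial_limit_at_left_real] by blast
  then show ?thesis by auto
qed

lemma continuous_bounded_above_on_Icc:
  fixes f :: "real \<Rightarrow> real"
  assumes "continuous_on {0..<r} f" "b < r"
  shows "\<exists>B. \<forall>x\<in>{0..b}. f x \<le> B"
proof (cases "0 \<le> b")
  case True
  have "continuous_on {0..b} f" using assms(1) by (rule continuous_on_subset) (use assms(2) in auto)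
  with True show ?thesis using continuous_attains_sup[OF compact_Icc] by fastforce
qed auto

lemma connected_constant_sign:
  fixes g :: "'a::topological_space \<Rightarrow> real"
  assumes "connected S" "continuous_on S g" "\<forall>x\<in>S. g x \<noteq> 0"
    and "u \<in> S" "v \<in> S" "g u < 0"
  shows "g v < 0"
proof (rule ccontr)
  assume "\<not> g v < 0"
  moreover have "connected (g ` S)" by (rule connected_continuous_image[OF assms(2,1)])
  ultimately have "0 \<in> g ` S"
    using assms(4-6) unfolding connected_iff_interval by (meson imageI less_eq_real_def not_less)
  with assms(3) show False by auto
qed

text \<open>Monotonicity holds because \<open>f'\<close> cannot
  vanish on \<open>(0,r)\<close> (the right-hand side is positive there), so it has a constant sign; a negative
  sign would make \<open>f\<close> decreasing, contradicting the blow-up at \<open>r\<close>.\<close>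
lemma blowup_solution_facts:
  assumes n: "2 \<le> n" and sol: "is_blowup_solution M n r f" and r: "0 < r"
  obtains f' where
    "\<And>u. u \<in> {0..<r} \<Longrightarrow> (f has_real_derivative f' u) (at u within {0..<r})"
    "\<And>u. u \<in> {0..<r} \<Longrightarrow>
       ((\<lambda>x. f' x ^ n) has_real_derivative real n * (exp (f u) * DM M n u)) (at u within {0..<r})"
    "f' 0 = 0" "\<And>u. u \<in> {0..<r} \<Longrightarrow> 0 \<le> f' u" "filterlim f at_top (at_left r)"
proof -
  from sol obtain f' f'' where
    d: "\<And>u. u \<in> {0..<r} \<Longrightarrow> (f has_real_derivative f' u) (at u within {0..<r})
             \<and> (f' has_real_derivative f'' u) (at u within {0..<r})
             \<and> f'' u * (f' u) ^ (n - 1) = exp (f u) * DM M n u"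
    and f'0: "f' 0 = 0" and lim: "filterlim f at_top (at_left r)"
    unfolding is_blowup_solution_def by blast
  have df: "(f has_real_derivative f' u) (at u within {0..<r})" if "u \<in> {0..<r}" for u
    using d[OF that] by blast
  have df': "(f' has_real_derivative f'' u) (at u within {0..<r})" if "u \<in> {0..<r}" for u
    using d[OF that] by blast
  have eqn: "f'' u * f' u ^ (n - 1) = exp (f u) * DM M n u" if "u \<in> {0..<r}" for u
    using d[OF that] by blast
  have dpow: "((\<lambda>x. f' x ^ n) has_real_derivative real n * (exp (f u) * DM M n u))
      (at u within {0..<r})" if u: "u \<in> {0..<r}" for u
    using DERIV_power[OF df'[OF u], of n] eqn[OF u] by (simp add: ac_simps)
  have nonzero: "f' u \<noteq> 0" if u: "u \<in> {0<..<r}" for u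
  proof
    assume "f' u = 0"
    then have "exp (f u) * DM M n u = 0" using eqn[of u] u n by (simp add: power_0_left)
    then show False using DM_pos[of u M n] u by simp
  qed
  have nonneg: "0 \<le> f' u" if u: "u \<in> {0..<r}" for u
  proof (rule ccontr)
    assume "\<not> 0 \<le> f' u"
    then have neg: "f' u < 0" by simp
    then have "u \<in> {0<..<r}" using u f'0 by (cases "u = 0") auto
    have "continuous_on {0<..<r} f'"
      using DERIV_continuous_on[OF df'] by (rule continuous_on_subset) auto
    then have "f' v < 0" if "v \<in> {0<..<r}" for v
      using connected_constant_sign[of "{0<..<r}" f' u v] nonzero \<open>u \<in> {0<..<r}\<close> neg that by auto
    then have nonpos: "f' v \<le> 0" if "v \<in> {0..<r}" for v
      using that f'0 by (cases "v = 0") (auto intro: less_imp_le)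
    have "f x \<le> f 0" if x: "x \<in> {0..<r}" for x
    proof -
      have sub: "{0..x} \<subseteq> {0..<r}" using x by auto
      have "(\<lambda>y. - f y) 0 \<le> (\<lambda>y. - f y) x"
      proof (rule nonneg_deriv_imp_le[where g = "\<lambda>y. - f y" and g' = "\<lambda>y. - f' y"])
        fix y assume "y \<in> {0..x}"
        then show "((\<lambda>y. - f y) has_real_derivative - f' y) (at y within {0..x})"
          using sub by (intro DERIV_minus has_field_derivative_subset[OF df]) auto
      qed (use x nonpos in auto)
      then show ?thesis by simp
    qed
    then show False using blowup_unbounded[OF lim r, of "f 0"] by fastforce
  qed
  show ?thesis using that df dpow f'0 nonneg lim by blast
qed

lemma sub_super_comparison:
  fixes p q p' q' P' Q' :: "real \<Rightarrow> real" and n :: nat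
  assumes n: "0 < n"
    and dp: "\<And>u. u \<in> {0..<T} \<Longrightarrow> (p has_real_derivative p' u) (at u within {0..<T})"
    and dq: "\<And>u. u \<in> {0..<T} \<Longrightarrow> (q has_real_derivative q' u) (at u within {0..<T})"
    and dP: "\<And>u. u \<in> {0..<T} \<Longrightarrow> ((\<lambda>x. p' x ^ n) has_real_derivative P' u) (at u within {0..<T})"
    and dQ: "\<And>u. u \<in> {0..<T} \<Longrightarrow> ((\<lambda>x. q' x ^ n) has_real_derivative Q' u) (at u within {0..<T})"
    and sub: "\<And>u. u \<in> {0..<T} \<Longrightarrow> P' u \<le> real n * (exp (p u) * DM M n u)"
    and super: "\<And>u. u \<in> {0..<T} \<Longrightarrow> real n * (exp (q u) * DM M n u) \<le> Q' u"
    and init: "p 0 < q 0" "p' 0 ^ n \<le> q' 0 ^ n"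
    and q'_nonneg: "\<And>u. u \<in> {0..<T} \<Longrightarrow> 0 \<le> q' u"
  shows "\<forall>u\<in>{0..<T}. p u < q u"
proof (rule comparison[OF n dp dq dP dQ init q'_nonneg])
  fix u assume u: "u \<in> {0..<T}" and "p u \<le> q u"
  then have "exp (p u) \<le> exp (q u)" by simp
  moreover have "0 \<le> DM M n u" using u by (simp add: DM_nonneg)
  ultimately have "real n * (exp (p u) * DM M n u) \<le> real n * (exp (q u) * DM M n u)"
    by (simp add: mult_left_mono mult_right_mono)
  then show "P' u \<le> Q' u" using sub[OF u] super[OF u] by linarith
qed

lemma has_real_derivative_rescale:
  fixes g :: "real \<Rightarrow> real"
  assumes "(g has_real_derivative D) (at (lam * u) within S)" "(\<lambda>x. lam * x) ` T \<subseteq> S"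
  shows "((\<lambda>x. g (lam * x)) has_real_derivative D * lam) (at u within T)"
proof -
  have "((\<lambda>x. lam * x) has_real_derivative lam) (at u within T)"
    by (auto intro!: derivative_eq_intros)
  from DERIV_image_chain[OF has_field_derivative_subset[OF assms] this] show ?thesis
    by (simp add: o_def)
qed

text \<open>For \<open>r_1 < r_2\<close> and \<open>\<lambda> > 1\<close> with \<open>\<lambda> r_1 < r_2\<close>, the
  rescaled function \<open>q(x) = h_{r_2}(\<lambda> x) + (n+1) log \<lambda>\<close> is a supersolution on \<open>[0,r_1)\<close>, since
  \<open>D_M\<close> is increasing.  If \<open>h_{r_1}(0) \<le> h_{r_2}(0)\<close>, comparison would give \<open>h_{r_1} < q\<close> on
  \<open>[0,r_1)\<close>; but \<open>q\<close> is bounded there while \<open>h_{r_1}\<close> blows up at \<open>r_1\<close>.\<close>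
lemma blowup_value_at_zero_decreasing:
  assumes n: "2 \<le> n"
    and sol1: "is_blowup_solution M n r1 f1" and sol2: "is_blowup_solution M n r2 f2"
    and r1: "0 < r1" and r12: "r1 < r2"
  shows "f2 0 < f1 0"
proof (rule ccontr)
  assume "\<not> f2 0 < f1 0"
  then have le: "f1 0 \<le> f2 0" by simp
  obtain p' where dp: "\<And>u. u \<in> {0..<r1} \<Longrightarrow> (f1 has_real_derivative p' u) (at u within {0..<r1})"
    and dP: "\<And>u. u \<in> {0..<r1} \<Longrightarrow>
      ((\<lambda>x. p' x ^ n) has_real_derivative real n * (exp (f1 u) * DM M n u)) (at u within {0..<r1})"
    and p'0: "p' 0 = 0" and lim: "filterlim f1 at_top (at_left r1)"
    using blowup_solution_facts[OF n sol1 r1] by metis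
  obtain g' where dg: "\<And>u. u \<in> {0..<r2} \<Longrightarrow> (f2 has_real_derivative g' u) (at u within {0..<r2})"
    and dG: "\<And>u. u \<in> {0..<r2} \<Longrightarrow>
      ((\<lambda>x. g' x ^ n) has_real_derivative real n * (exp (f2 u) * DM M n u)) (at u within {0..<r2})"
    and g'0: "g' 0 = 0" and g'_nonneg: "\<And>u. u \<in> {0..<r2} \<Longrightarrow> 0 \<le> g' u"
    using blowup_solution_facts[OF n sol2] r1 r12 by (metis order_less_trans)
  define lam where "lam = (r1 + r2) / (2 * r1)"
  have lam: "1 < lam" "lam * r1 < r2" using r1 r12 by (simp_all add: lam_def field_simps)
  define c where "c = real (n + 1) * ln lam"
  have "exp c = exp (ln lam) ^ (n + 1)" unfolding c_def by (rule exp_of_nat_mult)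
  then have c: "0 < c" "exp c = lam ^ (n + 1)" using lam(1) by (simp_all add: c_def)
  have in_r2: "lam * u \<in> {0..<r2}" if u: "u \<in> {0..<r1}" for u
  proof -
    have "lam * u < lam * r1" using u lam(1) by simp
    moreover have "0 \<le> lam * u" using u lam(1) by simp
    ultimately show ?thesis using lam(2) by simp
  qed
  then have img: "(\<lambda>x. lam * x) ` {0..<r1} \<subseteq> {0..<r2}" by blast
  have dq: "((\<lambda>x. f2 (lam * x) + c) has_real_derivative g' (lam * u) * lam) (at u within {0..<r1})"
    if u: "u \<in> {0..<r1}" for u
    using DERIV_add[OF has_real_derivative_rescale[OF dg[OF in_r2[OF u]] img] DERIV_const] by simp
  have dQ: "((\<lambda>x. (g' (lam * x) * lam) ^ n) has_real_derivative
      lam ^ n * (real n * (exp (f2 (lam * u)) * DM M n (lam * u)) * lam)) (at u within {0..<r1})"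
    if u: "u \<in> {0..<r1}" for u
    using DERIV_cmult[OF has_real_derivative_rescale[OF dG[OF in_r2[OF u]] img], of "lam ^ n"]
    by (simp add: power_mult_distrib mult_ac)
  have super: "real n * (exp (f2 (lam * u) + c) * DM M n u)
      \<le> lam ^ n * (real n * (exp (f2 (lam * u)) * DM M n (lam * u)) * lam)"
    if u: "u \<in> {0..<r1}" for u
  proof -
    have "u \<le> lam * u" using u lam(1) by (simp add: mult_le_cancel_right1)
    then have "DM M n u \<le> DM M n (lam * u)" using u by (intro DM_mono) auto
    then have "exp (f2 (lam * u)) * DM M n u \<le> exp (f2 (lam * u)) * DM M n (lam * u)" by simp
    then show ?thesis using lam(1) by (simp add: exp_add c(2) mult_left_mono mult_ac)
  qed
  have below: "\<forall>u\<in>{0..<r1}. f1 u < f2 (lam * u) + c"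
    using n le c(1) p'0 g'0 g'_nonneg[OF in_r2] lam(1)
    by (intro sub_super_comparison[OF _ dp dq dP dQ _ super]) auto
  have "continuous_on {0..<r2} f2" using dg by (rule DERIV_continuous_on)
  then obtain B where B: "\<forall>x\<in>{0..lam * r1}. f2 x \<le> B"
    using continuous_bounded_above_on_Icc lam(2) by blast
  obtain u where u: "u \<in> {0..<r1}" "B + c < f1 u" using blowup_unbounded[OF lim r1] by blast
  then have "lam * u \<in> {0..lam * r1}" using lam(1) by auto
  then show False using below u B by fastforce
qed

definition barrier_const :: "nat \<Rightarrow> real" where
  "barrier_const n = ln (2 * (2 * real (n + 1)) ^ n)"

definition barrier :: "nat \<Rightarrow> real \<Rightarrow> real \<Rightarrow> real" where
  "barrier n L x = barrier_const n + L - real (n + 1) * ln (exp L - x\<^sup>2)"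

definition barrier_slope :: "nat \<Rightarrow> real \<Rightarrow> real \<Rightarrow> real" where
  "barrier_slope n L x = 2 * real (n + 1) * x / (exp L - x\<^sup>2)"

definition barrier_curvature :: "nat \<Rightarrow> real \<Rightarrow> real \<Rightarrow> real" where
  "barrier_curvature n L x = 2 * real (n + 1) * (exp L + x\<^sup>2) / (exp L - x\<^sup>2)\<^sup>2"

lemma barrier_at_zero: "barrier n L 0 = barrier_const n - real n * L"
  by (simp add: barrier_def algebra_simps)

lemma barrier_derivatives:
  assumes "x\<^sup>2 < exp L"
  shows "(barrier n L has_real_derivative barrier_slope n L x) (at x)"
    and "(barrier_slope n L has_real_derivative barrier_curvature n L x) (at x)"
proof -
  define k where "k = real (n + 1)"
  have X: "0 < exp L - x\<^sup>2" using assms by simp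
  have "((\<lambda>x. barrier_const n + L - k * ln (exp L - x\<^sup>2)) has_real_derivative
      2 * k * x / (exp L - x\<^sup>2)) (at x)"
    using X by (auto intro!: derivative_eq_intros simp: field_simps power2_eq_square)
  moreover have "barrier n L = (\<lambda>x. barrier_const n + L - k * ln (exp L - x\<^sup>2))"
    by (simp add: barrier_def k_def fun_eq_iff)
  ultimately show "(barrier n L has_real_derivative barrier_slope n L x) (at x)"
    by (simp add: barrier_slope_def k_def)
  have "((\<lambda>x. 2 * k * x / (exp L - x\<^sup>2)) has_real_derivative
      2 * k * (exp L + x\<^sup>2) / (exp L - x\<^sup>2)\<^sup>2) (at x)"
    using X by (auto intro!: derivative_eq_intros simp: field_simps power2_eq_square)
  moreover have "barrier_slope n L = (\<lambda>x. 2 * k * x / (exp L - x\<^sup>2))"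
    by (simp add: barrier_slope_def k_def fun_eq_iff)
  ultimately show "(barrier_slope n L has_real_derivative barrier_curvature n L x) (at x)"
    by (simp add: barrier_curvature_def k_def)
qed

text \<open>With \<open>X = e^L - x^2\<close> the left side is
  \<open>(2(n+1))^n (e^L + x^2) x^{n-1} / X^{n+1}\<close>, and \<open>e^\<psi> = 2 (2(n+1))^n e^L / X^{n+1}\<close>.\<close>
lemma barrier_subsolution:
  assumes n: "0 < n" and x: "0 \<le> x" "x\<^sup>2 < exp L"
  shows "barrier_curvature n L x * barrier_slope n L x ^ (n - 1)
    \<le> exp (barrier n L x) * x ^ (n - 1)"
proof -
  define k where "k = real (n + 1)"
  define X where "X = exp L - x\<^sup>2"
  have X: "0 < X" using x by (simp add: X_def)
  have k: "1 \<le> k" by (simp add: k_def)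
  have "barrier_curvature n L x * barrier_slope n L x ^ (n - 1)
      = (2 * k / X) * (2 * k / X) ^ (n - 1) * ((exp L + x\<^sup>2) / X) * x ^ (n - 1)"
    by (simp add: barrier_curvature_def barrier_slope_def k_def X_def power2_eq_square
        power_mult_distrib[symmetric] mult_ac)
  also have "(2 * k / X) * (2 * k / X) ^ (n - 1) = (2 * k) ^ n / X ^ n"
    using n by (cases n) (simp_all add: power_divide)
  also have "(2 * k) ^ n / X ^ n * ((exp L + x\<^sup>2) / X)
      = (2 * k) ^ n * (exp L + x\<^sup>2) / X ^ (n + 1)"
    by simp
  also have "\<dots> \<le> (2 * k) ^ n * (2 * exp L) / X ^ (n + 1)"
    using x k X by (intro divide_right_mono mult_left_mono) auto
  also have "\<dots> = exp (barrier n L x)"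
  proof -
    have "exp (k * ln X) = exp (ln X) ^ (n + 1)" unfolding k_def by (rule exp_of_nat_mult)
    then have "exp (k * ln X) = X ^ (n + 1)" using X by simp
    moreover have "exp (barrier_const n) = 2 * (2 * k) ^ n" by (simp add: barrier_const_def k_def)
    ultimately show ?thesis by (simp add: barrier_def exp_add exp_diff k_def X_def mult_ac)
  qed
  finally show ?thesis using x by (simp add: mult_right_mono)
qed

text \<open>The barrier exceeds every bound close to \<open>e^{L/2}\<close>: take \<open>u\<close> with \<open>e^L - u^2 = \<epsilon>\<close> so small
  that \<open>-(n+1) log \<epsilon>\<close> dominates.\<close>
lemma barrier_unbounded:
  "\<exists>u\<in>{0..<sqrt (exp L)}. B < barrier n L u"
proof -
  define c where "c = barrier_const n + L"
  define M where "M = \<bar>B\<bar> + \<bar>c\<bar> + 1"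
  define \<epsilon> where "\<epsilon> = min (exp L / 2) (exp (- M))"
  have \<epsilon>: "0 < \<epsilon>" "\<epsilon> \<le> exp L / 2" "\<epsilon> \<le> exp (- M)" by (simp_all add: \<epsilon>_def)
  then have "\<epsilon> < exp L" using exp_gt_zero[of L] by linarith
  define u where "u = sqrt (exp L - \<epsilon>)"
  have u: "u\<^sup>2 = exp L - \<epsilon>" "u \<in> {0..<sqrt (exp L)}"
    using \<epsilon> \<open>\<epsilon> < exp L\<close> by (auto simp: u_def)
  have "ln \<epsilon> \<le> ln (exp (- M))" using \<epsilon> by (subst ln_le_cancel_iff) auto
  then have "M \<le> - ln \<epsilon>" by simp
  also have "\<dots> \<le> real (n + 1) * - ln \<epsilon>"
  proof -
    have "0 \<le> - ln \<epsilon>" using \<open>M \<le> - ln \<epsilon>\<close> by (simp add: M_def)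
    then have "1 * - ln \<epsilon> \<le> real (n + 1) * - ln \<epsilon>" by (intro mult_right_mono) auto
    then show ?thesis by simp
  qed
  finally have "B < barrier n L u"
    by (simp add: barrier_def u(1) c_def M_def)
  with u(2) show ?thesis by blast
qed

text \<open>A blow-up solution is non-decreasing, so its infimum is its value at the centre.\<close>
lemma blowup_solution_inf_at_zero:
  assumes n: "2 \<le> n" and sol: "is_blowup_solution M n r f" and r: "0 < r"
  shows "f 0 = (INF u\<in>{0..<r}. f u)"
proof -
  obtain f' where df: "\<And>u. u \<in> {0..<r} \<Longrightarrow> (f has_real_derivative f' u) (at u within {0..<r})"
    and f'_nonneg: "\<And>u. u \<in> {0..<r} \<Longrightarrow> 0 \<le> f' u"
    using blowup_solution_facts[OF n sol r] by metis
  have "f 0 \<le> f x" if x: "x \<in> {0..<r}" for x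
  proof (rule nonneg_deriv_imp_le[where g = f and g' = f'])
    fix y assume "y \<in> {0..x}"
    then show "(f has_real_derivative f' y) (at y within {0..x})"
      using x by (intro has_field_derivative_subset[OF df]) auto
  qed (use x f'_nonneg in auto)
  then show ?thesis using r by (intro cInf_eq_minimum[symmetric]) auto
qed

text \<open>Every blow-up solution on \<open>[0,r)\<close> with \<open>r > e^{L/2}\<close> lies below the barrier at the centre:
  otherwise comparison would keep the solution above the barrier on \<open>[0, e^{L/2})\<close>, where the
  solution is bounded but the barrier is not.\<close>
lemma blowup_solution_below_barrier:
  assumes n: "2 \<le> n" and sol: "is_blowup_solution M n r f" and R: "sqrt (exp L) < r"
  shows "f 0 \<le> barrier n L 0"
proof (rule ccontr)
  assume "\<not> f 0 \<le> barrier n L 0"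
  then have start: "barrier n L 0 < f 0" by simp
  define R where "R = sqrt (exp L)"
  have "0 < sqrt (exp L)" by simp
  with R have r: "0 < r" by linarith
  obtain f' where df: "\<And>u. u \<in> {0..<r} \<Longrightarrow> (f has_real_derivative f' u) (at u within {0..<r})"
    and dF: "\<And>u. u \<in> {0..<r} \<Longrightarrow>
      ((\<lambda>x. f' x ^ n) has_real_derivative real n * (exp (f u) * DM M n u)) (at u within {0..<r})"
    and f'0: "f' 0 = 0" and f'_nonneg: "\<And>u. u \<in> {0..<r} \<Longrightarrow> 0 \<le> f' u"
    using blowup_solution_facts[OF n sol r] by metis
  have sub: "{0..<R} \<subseteq> {0..<r}" using R by (auto simp: R_def)
  have in_dom: "x\<^sup>2 < exp L" if "x \<in> {0..<R}" for x
    using that real_sqrt_less_iff[of "x\<^sup>2" "exp L"] by (simp add: R_def)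
  have above: "\<forall>u\<in>{0..<R}. barrier n L u < f u"
  proof (rule sub_super_comparison[where p' = "barrier_slope n L" and q' = f'
        and P' = "\<lambda>u. real n * (barrier_curvature n L u * barrier_slope n L u ^ (n - 1))"
        and Q' = "\<lambda>u. real n * (exp (f u) * DM M n u)" and M = M])
    fix u assume u: "u \<in> {0..<R}"
    then have u': "u \<in> {0..<r}" using sub by blast
    note deriv = barrier_derivatives[OF in_dom[OF u], of n]
    show "(barrier n L has_real_derivative barrier_slope n L u) (at u within {0..<R})"
      using deriv(1) by (rule has_field_derivative_at_within)
    show "((\<lambda>x. barrier_slope n L x ^ n) has_real_derivative
        real n * (barrier_curvature n L u * barrier_slope n L u ^ (n - 1))) (at u within {0..<R})"
      using DERIV_power[OF has_field_derivative_at_within[OF deriv(2)], of n "{0..<R}"] by simp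
    show "(f has_real_derivative f' u) (at u within {0..<R})"
      using df[OF u'] sub by (rule has_field_derivative_subset)
    show "((\<lambda>x. f' x ^ n) has_real_derivative real n * (exp (f u) * DM M n u)) (at u within {0..<R})"
      using dF[OF u'] sub by (rule has_field_derivative_subset)
    show "0 \<le> f' u" using f'_nonneg[OF u'] .
    have "barrier_curvature n L u * barrier_slope n L u ^ (n - 1) \<le> exp (barrier n L u) * u ^ (n - 1)"
      using n u in_dom[OF u] by (intro barrier_subsolution) auto
    also have "\<dots> \<le> exp (barrier n L u) * DM M n u"
      using u DM_ge_Euclidean[of u n M] by simp
    finally show "real n * (barrier_curvature n L u * barrier_slope n L u ^ (n - 1))
        \<le> real n * (exp (barrier n L u) * DM M n u)" by (simp add: mult_left_mono)
  qed (use n start f'0 in \<open>auto simp: barrier_slope_def\<close>)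
  have "continuous_on {0..<r} f" using df by (rule DERIV_continuous_on)
  then obtain B where B: "\<forall>x\<in>{0..R}. f x \<le> B"
    using continuous_bounded_above_on_Icc R unfolding R_def by blast
  obtain u where u: "u \<in> {0..<R}" "B < barrier n L u"
    using barrier_unbounded unfolding R_def by blast
  then have "barrier n L u < f u" "f u \<le> B" using above B by auto
  with u(2) show False by simp
qed

text \<open>Hence the values at the centre tend to \<open>-\<infinity>\<close>: given \<open>Z\<close>, choose \<open>L\<close> with \<open>C_n - n L \<le> Z\<close>.\<close>
lemma blowup_value_at_zero_tends_to_bot:
  assumes n: "2 \<le> n" and sol: "\<And>r. 0 < r \<Longrightarrow> is_blowup_solution M n r (h r)"
  shows "filterlim (\<lambda>r. h r 0) at_bot at_top"
  unfolding filterlim_at_bot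
proof
  fix Z :: real
  define L where "L = \<bar>barrier_const n - Z\<bar>"
  have bound: "barrier n L 0 \<le> Z"
  proof -
    have "L \<le> real n * L" using n by (simp add: L_def mult_le_cancel_right1)
    then show ?thesis by (simp add: barrier_at_zero L_def)
  qed
  have "eventually (\<lambda>r. sqrt (exp L) < r) at_top" by (rule eventually_gt_at_top)
  then show "eventually (\<lambda>r. h r 0 \<le> Z) at_top"
  proof eventually_elim
    case (elim r)
    moreover have "0 < sqrt (exp L)" by simp
    ultimately have "0 < r" by linarith
    then show ?case using blowup_solution_below_barrier[OF n sol elim] bound by linarith
  qed
qed

theorem lemma3p1:
  fixes M :: model_space and n :: nat and h :: "real \<Rightarrow> real \<Rightarrow> real"
  assumes "valid_dim M n"
    and "\<And>r. r > 0 \<Longrightarrow> is_blowup_solution M n r (h r)"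
  shows "(\<forall>r>0. h r 0 = (INF u\<in>{0..<r}. h r u))
       \<and> (\<forall>r1 r2. 0 < r1 \<longrightarrow> r1 < r2 \<longrightarrow> h r2 0 < h r1 0)
       \<and> filterlim (\<lambda>r. h r 0) at_bot at_top"
proof (intro conjI allI impI)
  have n: "2 \<le> n" using assms(1) by (simp add: valid_dim_def)
  show "h r 0 = (INF u\<in>{0..<r}. h r u)" if "0 < r" for r
    using blowup_solution_inf_at_zero[OF n assms(2)[OF that] that] .
  show "h r2 0 < h r1 0" if "0 < r1" "r1 < r2" for r1 r2
    using blowup_value_at_zero_decreasing[OF n assms(2) assms(2) that] that by simp
  show "filterlim (\<lambda>r. h r 0) at_bot at_top"
    using blowup_value_at_zero_tends_to_bot[OF n assms(2)] by blast
qed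

end
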